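(* Let $\mathcal D_{st}=(D,<_{st},\rho)$ and $\mathcal D_{wk}=(D,<_{wk},\rho)$ be two computable partially ordered sets on the same set $D$ such that $<_{st}$ extends $<_{wk}$. Then $K^{\mathcal D_{st}}_{\min}\le_{ct}K^{\mathcal D_{wk}}_{\min}$ and $K^{\mathcal D_{st}}_{\max}\le_{ct}K^{\mathcal D_{wk}}_{\max}$.
   Context: A computable partially ordered set is a triple $\mathcal D=(D,<,\rho)$ where $\rho:\mathbb N\to D$ is a bijection and $<$ is a strict partial order on $D$ with $\{(m,n):\rho(m)<\rho(n)\}$ computable; a partial function into $D$ is partial computable if its composition with $\rho^{-1}$ is. For a partial $f:\{0,1\}^*\times\mathbb N\to D$ monotone increasing in its second argument on its domain, $\max^{\mathcal D}f$ is the partial function defined exactly at those $p$ for which $\{f(p,t):t,\ f(p,t)\text{ defined}\}$ is finite and non-empty, with value its maximum. $\mathrm{Max}_{\mathrm{PR}}[\{0,1\}^*\to\mathcal D]$ is the class of all $\max^{\mathcal D}f$ with $f$ partial computable and monotone increasing in its second argument. For partial $\varphi:\{0,1\}^*\to D$, $K_\varphi(d)=\min\{|p|:\varphi(p)=d\}$. $K^{\mathcal D}_{\max}$ is $K_U$ for some $U$ optimal in $\mathrm{Max}_{\mathrm{PR}}[\{0,1\}^*\to\mathcal D]$ (for every $F$ in the class, $K_U\le K_F+c$ wherever $K_F$ is defined, for some $c$); $K^{\mathcal D}_{\min}$ is $K^{\mathcal D'}_{\max}$ for the reverse order $\mathcal D'=(D,>,\rho)$. These are total functions $D\to\mathbb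 N$ defined up to an additive constant. $f\le_{ct}g$ iff $\exists c\,\forall d\ f(d)\le g(d)+c$. *)

theory Defs
  imports Main
begin

datatype recf = Zero | Succ | Proj nat | Comp recf "recf list" | Prim recf recf | Mu recf

inductive eval :: "recf \<Rightarrow> nat list \<Rightarrow> nat \<Rightarrow> bool" where
  eval_zero: "eval Zero xs 0"
| eval_succ: "eval Succ (x # xs) (Suc x)"
| eval_proj: "i < length xs \<Longrightarrow> eval (Proj i) xs (xs ! i)"
| eval_comp: "length ys = length gs \<Longrightarrow> (\<forall>i<length gs. eval (gs ! i) xs (ys ! i))
      \<Longrightarrow> eval f ys z \<Longrightarrow> eval (Comp f gs) xs z"
| eval_prim0: "eval g xs y \<Longrightarrow> eval (Prim g h) (0 # xs) y"
| eval_primS: "eval (Prim g h) (n # xs) y \<Longrightarrow> eval h (y # n # xs) z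
      \<Longrightarrow> eval (Prim g h) (Suc n # xs) z"
| eval_mu: "eval f (n # xs) 0 \<Longrightarrow> (\<forall>m<n. \<exists>k. eval f (m # xs) (Suc k))
      \<Longrightarrow> eval (Mu f) xs n"

fun enc :: "bool list \<Rightarrow> nat" where
  "enc [] = 0"
| "enc (b # bs) = 2 * enc bs + (if b then 2 else 1)"

definition strict_po :: "('d \<Rightarrow> 'd \<Rightarrow> bool) \<Rightarrow> bool" where
  "strict_po lt \<longleftrightarrow> (\<forall>x. \<not> lt x x) \<and> (\<forall>x y z. lt x y \<longrightarrow> lt y z \<longrightarrow> lt x z)"

definition computable_poset :: "('d \<Rightarrow> 'd \<Rightarrow> bool) \<Rightarrow> (nat \<Rightarrow> 'd) \<Rightarrow> bool" where
  "computable_poset lt \<rho> \<longleftrightarrow> bij \<rho> \<and> strict_po lt \<and>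
     (\<exists>g. \<forall>m n. eval g [m, n] (if lt (\<rho> m) (\<rho> n) then 1 else 0))"

definition partial_computable2 :: "(nat \<Rightarrow> 'd) \<Rightarrow> (bool list \<Rightarrow> nat \<Rightarrow> 'd option) \<Rightarrow> bool" where
  "partial_computable2 \<rho> f \<longleftrightarrow>
     (\<exists>g. \<forall>p t y. eval g [enc p, t] y \<longleftrightarrow> f p t = Some (\<rho> y))"

definition mono_incr :: "('d \<Rightarrow> 'd \<Rightarrow> bool) \<Rightarrow> (bool list \<Rightarrow> nat \<Rightarrow> 'd option) \<Rightarrow> bool" where
  "mono_incr lt f \<longleftrightarrow> (\<forall>p t t' a b. t \<le> t' \<longrightarrow> f p t = Some a \<longrightarrow> f p t' = Some b
       \<longrightarrow> (a = b \<or> lt a b))"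

definition maxD :: "('d \<Rightarrow> 'd \<Rightarrow> bool) \<Rightarrow> (bool list \<Rightarrow> nat \<Rightarrow> 'd option) \<Rightarrow> bool list \<Rightarrow> 'd option" where
  "maxD lt f p =
     (let S = {d. \<exists>t. f p t = Some d} in
      if finite S \<and> S \<noteq> {} then Some (THE d. d \<in> S \<and> (\<forall>e\<in>S. e = d \<or> lt e d)) else None)"

definition MaxPR :: "('d \<Rightarrow> 'd \<Rightarrow> bool) \<Rightarrow> (nat \<Rightarrow> 'd) \<Rightarrow> (bool list \<Rightarrow> 'd option) set" where
  "MaxPR lt \<rho> = {maxD lt f | f. partial_computable2 \<rho> f \<and> mono_incr lt f}"

definition Kc :: "(bool list \<Rightarrow> 'd option) \<Rightarrow> 'd \<Rightarrow> nat option" where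
  "Kc \<phi> d = (if \<exists>p. \<phi> p = Some d then Some (LEAST n. \<exists>p. \<phi> p = Some d \<and> length p = n) else None)"

definition optimal_max :: "('d \<Rightarrow> 'd \<Rightarrow> bool) \<Rightarrow> (nat \<Rightarrow> 'd) \<Rightarrow> (bool list \<Rightarrow> 'd option) \<Rightarrow> bool" where
  "optimal_max lt \<rho> U \<longleftrightarrow> U \<in> MaxPR lt \<rho> \<and>
     (\<forall>F\<in>MaxPR lt \<rho>. \<exists>c. \<forall>d n. Kc F d = Some n \<longrightarrow> (\<exists>m. Kc U d = Some m \<and> m \<le> n + c))"

text \<open>Optimal for the reverse order (used for K_min).\<close>
definition optimal_min :: "('d \<Rightarrow> 'd \<Rightarrow> bool) \<Rightarrow> (nat \<Rightarrow> 'd) \<Rightarrow> (bool list \<Rightarrow> 'd option) \<Rightarrow> bool" where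
  "optimal_min lt \<rho> U \<longleftrightarrow> optimal_max (\<lambda>x y. lt y x) \<rho> U"

definition le_ct :: "('d \<Rightarrow> nat option) \<Rightarrow> ('d \<Rightarrow> nat option) \<Rightarrow> bool" where
  "le_ct f g \<longleftrightarrow> (\<exists>c. \<forall>d n. g d = Some n \<longrightarrow> (\<exists>m. f d = Some m \<and> m \<le> n + c))"

end

theory Submission
  imports Defs
begin

text \<open>A partial computable function that is monotone for the weaker order is also monotone for
  the stronger one, and since its values at any fixed program form a chain of the weaker order,
  their greatest element is the same for both orders. Hence every function in the max-class of the
  weaker order lies in the max-class of the stronger order, and an optimal function of the stronger
  class is in particular at least as good as an optimal function of the weaker class. The statement
  for the minimal complexities is the same argument applied to the reversed orders.\<close>

lemma strict_po_converse: "strict_po lt \<Longrightarrow> strict_po (\<lambda>x y. lt y x)"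
  unfolding strict_po_def by blast

lemma mono_incr_mono_order:
  assumes "\<And>x y. lt1 x y \<Longrightarrow> lt2 x y" and "mono_incr lt1 f"
  shows "mono_incr lt2 f"
  using assms unfolding mono_incr_def by blast

lemma mono_incr_greatest_value:
  assumes mono: "mono_incr lt f"
    and fin: "finite {d. \<exists>t. f p t = Some d}" and ne: "{d. \<exists>t. f p t = Some d} \<noteq> {}"
  obtains d0 where "\<exists>t. f p t = Some d0" and "\<And>e. \<exists>t. f p t = Some e \<Longrightarrow> e = d0 \<or> lt e d0"
proof -
  define S where "S = {d. \<exists>t. f p t = Some d}"
  \<comment> \<open>The value attained at the latest of these witness times dominates all the others.\<close>
  define time where "time d = (SOME t. f p t = Some d)" for d
  have f_time: "f p (time d) = Some d" if "d \<in> S" for d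
    using that unfolding time_def S_def by (auto intro: someI_ex)
  have "finite (time ` S)" "time ` S \<noteq> {}"
    using fin ne unfolding S_def by auto
  then obtain d0 where d0: "d0 \<in> S" "Max (time ` S) = time d0"
    using Max_in by blast
  have "e = d0 \<or> lt e d0" if "e \<in> S" for e
  proof -
    have "time e \<le> Max (time ` S)"
      using \<open>finite (time ` S)\<close> that by simp
    then have "time e \<le> time d0"
      using d0(2) by simp
    then show ?thesis
      using mono f_time[OF that] f_time[OF d0(1)] unfolding mono_incr_def by blast
  qed
  then show thesis
    using that d0(1) unfolding S_def by blast
qed

lemma maxD_eq_SomeI:
  assumes po: "strict_po lt" and fin: "finite {d. \<exists>t. f p t = Some d}"
    and d0: "\<exists>t. f p t = Some d0"
    and greatest: "\<And>e. \<exists>t. f p t = Some e \<Longrightarrow> e = d0 \<or> lt e d0"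
  shows "maxD lt f p = Some d0"
proof -
  define S where "S = {d. \<exists>t. f p t = Some d}"
  have "(THE d. d \<in> S \<and> (\<forall>e\<in>S. e = d \<or> lt e d)) = d0"
  proof (rule the_equality)
    show "d0 \<in> S \<and> (\<forall>e\<in>S. e = d0 \<or> lt e d0)"
      using d0 greatest unfolding S_def by blast
  next
    fix d assume d: "d \<in> S \<and> (\<forall>e\<in>S. e = d \<or> lt e d)"
    then have "d = d0 \<or> lt d d0"
      using greatest unfolding S_def by blast
    moreover have "d0 = d \<or> lt d0 d"
      using d d0 unfolding S_def by blast
    ultimately show "d = d0"
      using po unfolding strict_po_def by blast
  qed
  moreover have "finite S" "S \<noteq> {}"
    using fin d0 unfolding S_def by auto
  ultimately show ?thesis
    unfolding maxD_def Let_def S_def[symmetric] by simp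
qed

lemma maxD_extend_order:
  assumes sub: "\<And>x y. lt1 x y \<Longrightarrow> lt2 x y"
    and po1: "strict_po lt1" and po2: "strict_po lt2" and mono: "mono_incr lt1 f"
  shows "maxD lt1 f p = maxD lt2 f p"
proof (cases "finite {d. \<exists>t. f p t = Some d} \<and> {d. \<exists>t. f p t = Some d} \<noteq> {}")
  case True
  then obtain d0 where d0: "\<exists>t. f p t = Some d0"
    and greatest: "\<And>e. \<exists>t. f p t = Some e \<Longrightarrow> e = d0 \<or> lt1 e d0"
    using mono_incr_greatest_value[OF mono] by blast
  have "maxD lt1 f p = Some d0"
    using True d0 greatest by (intro maxD_eq_SomeI[OF po1]) auto
  moreover have "maxD lt2 f p = Some d0"
    using True d0 greatest sub by (intro maxD_eq_SomeI[OF po2]) blast+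
  ultimately show ?thesis by simp
next
  case False
  then show ?thesis unfolding maxD_def Let_def by auto
qed

lemma MaxPR_extend_order:
  assumes "\<And>x y. lt1 x y \<Longrightarrow> lt2 x y" and "strict_po lt1" and "strict_po lt2"
  shows "MaxPR lt1 \<rho> \<subseteq> MaxPR lt2 \<rho>"
proof
  fix U assume "U \<in> MaxPR lt1 \<rho>"
  then obtain f where U: "U = maxD lt1 f" and "partial_computable2 \<rho> f" "mono_incr lt1 f"
    unfolding MaxPR_def by blast
  moreover have "maxD lt1 f = maxD lt2 f"
    using maxD_extend_order[OF assms \<open>mono_incr lt1 f\<close>] by blast
  moreover have "mono_incr lt2 f"
    using mono_incr_mono_order[OF assms(1) \<open>mono_incr lt1 f\<close>] .
  ultimately show "U \<in> MaxPR lt2 \<rho>"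
    unfolding MaxPR_def by auto
qed

lemma optimal_max_extend_order_le_ct:
  assumes "\<And>x y. lt1 x y \<Longrightarrow> lt2 x y" and "strict_po lt1" and "strict_po lt2"
    and "optimal_max lt2 \<rho> U2" and "optimal_max lt1 \<rho> U1"
  shows "le_ct (Kc U2) (Kc U1)"
  using assms(4,5) MaxPR_extend_order[OF assms(1-3)]
  unfolding optimal_max_def le_ct_def by blast

theorem mainTheorem16:
  fixes less_st less_wk :: "'d \<Rightarrow> 'd \<Rightarrow> bool" and \<rho> :: "nat \<Rightarrow> 'd"
  assumes "computable_poset less_st \<rho>"
    and "computable_poset less_wk \<rho>"
    and "\<And>x y. less_wk x y \<Longrightarrow> less_st x y"
  shows "(\<forall>Ust Uwk. optimal_min less_st \<rho> Ust \<longrightarrow> optimal_min less_wk \<rho> Uwk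
            \<longrightarrow> le_ct (Kc Ust) (Kc Uwk))
       \<and> (\<forall>Ust Uwk. optimal_max less_st \<rho> Ust \<longrightarrow> optimal_max less_wk \<rho> Uwk
            \<longrightarrow> le_ct (Kc Ust) (Kc Uwk))"
proof -
  have st: "strict_po less_st" and wk: "strict_po less_wk"
    using assms(1,2) unfolding computable_poset_def by blast+
  show ?thesis
    unfolding optimal_min_def
    using optimal_max_extend_order_le_ct[OF assms(3) wk st]
      optimal_max_extend_order_le_ct[of "\<lambda>x y. less_wk y x" "\<lambda>x y. less_st y x",
        OF assms(3) strict_po_converse[OF wk] strict_po_converse[OF st]]
    by blast
qed

end
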